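(* Let $(\Omega,\mathcal{F},\mathbf{P})$ be a probability space and $\theta\colon\Omega\to\Omega$ an ergodic automorphism of it. Let $A$ be an $N\times N$ matrix with nonnegative entries $a_{ij}$, and let $D\colon\Omega\to\mathbb{R}^{N\times N}$ be a measurable matrix function such that (A1) for each $\omega\in\Omega$, $D(\omega)=\mathrm{diag}(d_1(\omega),\dots,d_N(\omega))$ with $d_i(\omega)>0$ for $1\le i\le N$; (A2) $\ln^{+}\bigl(\max_{1\le i\le N} d_i(\cdot)\bigr)\in L_1(\Omega,\mathcal{F},\mathbf{P})$. Let $\lambda\in[-\infty,\infty)$ be the top Lyapunov exponent of the random matrix system $\{A D(\omega)\}_{\omega\in\Omega}$, and let $\bar{D}=\mathrm{diag}(\bar d_1,\dots,\bar d_N)$ where $\ln \bar d_i=\int_\Omega \ln d_i\,d\mathbf{P}$ (with the conventions $\ln 0=-\infty$, $e^{-\infty}=0$, so $\bar d_i\in[0,\infty)$). Then $\lambda\ge \ln r(A\bar D)$, where $r(A\bar D)$ is the spectral radius of $A\bar D$.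
   Context: An automorphism $\theta$ of $(\Omega,\mathcal{F},\mathbf{P})$ is ergodic if every $\Omega'\in\mathcal{F}$ with $\theta(\Omega')=\Omega'$ has $\mathbf{P}(\Omega')\in\{0,1\}$. For a measurable $S\colon\Omega\to\mathbb{R}^{N\times N}$ put $S^{(n)}(\omega)=S(\theta^{n-1}\omega)\cdots S(\theta\omega)S(\omega)$. When $\ln^+\|S(\cdot)\|\in L_1$, there is $\lambda\in[-\infty,\infty)$ with $\lambda=\lim_{n\to\infty}\frac1n\ln\|S^{(n)}(\omega)\|$ for a.e. $\omega$ (Furstenberg–Kesten); this $\lambda$ is called the top Lyapunov exponent of the system $\{S(\omega)\}$. Here $S(\omega)=AD(\omega)$, $\|\cdot\|$ is the Euclidean (operator) norm, and $\ln 0=-\infty$. *)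

theory Defs
  imports "HOL-Probability.Probability"
begin

definition eln :: "real \<Rightarrow> ereal" where
  "eln x = (if x = 0 then -\<infinity> else ereal (ln x))"

definition eexp :: "ereal \<Rightarrow> real" where
  "eexp x = (if x = -\<infinity> then 0 else exp (real_of_ereal x))"

text \<open>Extended integral of a real function: positive part minus negative part
  (well defined whenever the positive part has finite integral).\<close>
definition ext_integral :: "'a measure \<Rightarrow> ('a \<Rightarrow> real) \<Rightarrow> ereal" where
  "ext_integral M f =
     enn2ereal (\<integral>\<^sup>+ x. ennreal (max 0 (f x)) \<partial>M) - enn2ereal (\<integral>\<^sup>+ x. ennreal (max 0 (- f x)) \<partial>M)"

definition automorphism :: "'a measure \<Rightarrow> ('a \<Rightarrow> 'a) \<Rightarrow> bool" where
  "automorphism M \<theta> \<longleftrightarrow>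
     bij_betw \<theta> (space M) (space M) \<and>
     \<theta> \<in> M \<rightarrow>\<^sub>M M \<and>
     the_inv_into (space M) \<theta> \<in> M \<rightarrow>\<^sub>M M \<and>
     (\<forall>B \<in> sets M. emeasure M (\<theta> -` B \<inter> space M) = emeasure M B)"

definition ergodic_automorphism :: "'a measure \<Rightarrow> ('a \<Rightarrow> 'a) \<Rightarrow> bool" where
  "ergodic_automorphism M \<theta> \<longleftrightarrow>
     automorphism M \<theta> \<and>
     (\<forall>B \<in> sets M. \<theta> ` B = B \<longrightarrow> measure M B = 0 \<or> measure M B = 1)"

fun cocycle :: "('a \<Rightarrow> 'a) \<Rightarrow> ('a \<Rightarrow> real^'n^'n) \<Rightarrow> nat \<Rightarrow> 'a \<Rightarrow> real^'n^'n" where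
  "cocycle \<theta> S 0 w = mat 1"
| "cocycle \<theta> S (Suc n) w = S ((\<theta> ^^ n) w) ** cocycle \<theta> S n w"

definition opnorm :: "real^'n^'n \<Rightarrow> real" where
  "opnorm B = onorm (\<lambda>x. B *v x)"

definition cmat :: "real^'n^'n \<Rightarrow> complex^'n^'n" where
  "cmat B = (\<chi> i j. complex_of_real (B $ i $ j))"

definition cspectrum :: "real^'n^'n \<Rightarrow> complex set" where
  "cspectrum B = {z. \<exists>v::complex^'n. v \<noteq> 0 \<and> cmat B *v v = z *s v}"

definition spectral_radius :: "real^'n^'n \<Rightarrow> real" where
  "spectral_radius B = Max (cmod ` cspectrum B)"

end

theory Submission
  imports Defs "Jordan_Normal_Form.Spectral_Radius"
begin

text \<open>Let \<rho> be the spectral radius of the nonnegative matrix B = A Dbar. Testing the powers of B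
  against an eigenvector for an eigenvalue of modulus \<rho> shows that some entry of B^n is at least
  \<rho>^n / N. A positive entry of B^n bounds the corresponding entry of the random product S_n from
  below on the logarithmic scale: expanding one factor of the product, using concavity of ln with
  the weights of that expansion and the \<theta>-invariance of P, one obtains by induction on n an
  integrable minorant of ln (S_n)_ij whose integral is ln (B^n)_ij. So ln |S_n| has "expectation" at
  least n ln \<rho> - ln N. Conversely, ln |S_n(w)| is dominated by n ln \<alpha> + \<Sum>_{k<n} ln+ max d(\<theta>^k w), a
  sum of identically distributed integrable terms; this uniform integrability lets the almost sure
  limit \<lambda> of ln |S_n| / n bound those expectations from above.\<close>

hide_const (open) Spectral_Radius.spectral_radius Matrix.mat Matrix.vec
no_notation Matrix.vec_index (infixl "$" 100)

section \<open>Eigenvalues and powers of real matrices\<close>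

definition vec_of_cart :: "(nat \<Rightarrow> 'n) \<Rightarrow> nat \<Rightarrow> 'a^'n \<Rightarrow> 'a Matrix.vec" where
  "vec_of_cart f N v = Matrix.vec N (\<lambda>i. v $ f i)"

definition mat_of_cart :: "(nat \<Rightarrow> 'n) \<Rightarrow> nat \<Rightarrow> 'a^'n^'n \<Rightarrow> 'a Matrix.mat" where
  "mat_of_cart f N X = Matrix.mat N N (\<lambda>(i, j). X $ f i $ f j)"

lemma vec_of_cart_carrier: "vec_of_cart f N v \<in> carrier_vec N"
  by (simp add: vec_of_cart_def)

lemma mat_of_cart_carrier: "mat_of_cart f N X \<in> carrier_mat N N"
  by (simp add: mat_of_cart_def)

lemma vec_of_cart_smult: "vec_of_cart f N (z *s v) = z \<cdot>\<^sub>v vec_of_cart f N v"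
  by (intro eq_vecI) (auto simp: vec_of_cart_def)

lemma vec_of_cart_zero: "vec_of_cart f N 0 = 0\<^sub>v N"
  by (intro eq_vecI) (auto simp: vec_of_cart_def)

context
  fixes f :: "nat \<Rightarrow> 'n::finite" and N :: nat
  assumes f: "bij_betw f {0..<N} UNIV"
begin

lemma vec_of_cart_inj: "vec_of_cart f N v = vec_of_cart f N v' \<Longrightarrow> v = v'"
proof (rule Finite_Cartesian_Product.vec_eq_iff[THEN iffD2], rule allI)
  fix x
  have "x \<in> f ` {0..<N}" using f by (simp add: bij_betw_def)
  then obtain i where "i < N" "x = f i" by auto
  moreover assume "vec_of_cart f N v = vec_of_cart f N v'"
  then have "vec_index (vec_of_cart f N v) i = vec_index (vec_of_cart f N v') i" by simp
  ultimately show "v $ x = v' $ x" by (simp add: vec_of_cart_def)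
qed

lemma vec_of_cart_surj:
  assumes "w \<in> carrier_vec N"
  shows "w = vec_of_cart f N (\<chi> x. vec_index w (inv_into {0..<N} f x))"
  using assms f by (intro eq_vecI) (auto simp: vec_of_cart_def bij_betw_def)

lemma mat_of_cart_mult_vec:
  "mat_of_cart f N X *\<^sub>v vec_of_cart f N v = vec_of_cart f N (X *v (v :: 'a::comm_semiring_1^'n))"
proof (rule eq_vecI)
  fix i assume "i < dim_vec (vec_of_cart f N (X *v v))"
  then have i: "i < N" by (simp add: vec_of_cart_def)
  have "vec_index (mat_of_cart f N X *\<^sub>v vec_of_cart f N v) i = (\<Sum>j<N. X $ f i $ f j * v $ f j)"
    using i by (simp add: mat_of_cart_def vec_of_cart_def scalar_prod_def atLeast0LessThan)
  also have "\<dots> = (\<Sum>x\<in>UNIV. X $ f i $ x * v $ x)"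
    using sum.reindex_bij_betw[OF f, of "\<lambda>x. X $ f i $ x * v $ x"] by (simp add: atLeast0LessThan)
  finally show "vec_index (mat_of_cart f N X *\<^sub>v vec_of_cart f N v) i = vec_index (vec_of_cart f N (X *v v)) i"
    using i by (simp add: vec_of_cart_def matrix_vector_mult_def)
qed (simp add: vec_of_cart_def mat_of_cart_def)

lemma cspectrum_eq_spectrum_mat_of_cart: "cspectrum B = spectrum (mat_of_cart f N (cmat B))"
proof (intro Set.set_eqI iffI)
  fix z assume "z \<in> spectrum (mat_of_cart f N (cmat B))"
  then obtain w where w: "w \<in> carrier_vec N" "w \<noteq> 0\<^sub>v N" "mat_of_cart f N (cmat B) *\<^sub>v w = z \<cdot>\<^sub>v w"
    unfolding spectrum_def eigenvalue_def eigenvector_def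
    by (auto simp: carrier_matD[OF mat_of_cart_carrier])
  obtain v where v: "w = vec_of_cart f N v" using vec_of_cart_surj[OF w(1)] by blast
  with w have "v \<noteq> 0" "cmat B *v v = z *s v"
    by (auto simp: vec_of_cart_zero mat_of_cart_mult_vec simp flip: vec_of_cart_smult
        intro: vec_of_cart_inj)
  then show "z \<in> cspectrum B" unfolding cspectrum_def by blast
next
  fix z assume "z \<in> cspectrum B"
  then obtain v where "v \<noteq> 0" "cmat B *v v = z *s v" unfolding cspectrum_def by blast
  then have "eigenvector (mat_of_cart f N (cmat B)) (vec_of_cart f N v) z"
    using vec_of_cart_inj[of v 0]
    by (auto simp: eigenvector_def vec_of_cart_carrier vec_of_cart_zero vec_of_cart_smult
        mat_of_cart_mult_vec carrier_matD[OF mat_of_cart_carrier])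
  then show "z \<in> spectrum (mat_of_cart f N (cmat B))"
    unfolding spectrum_def eigenvalue_def by blast
qed

end

lemma cspectrum_finite_nonempty: "finite (cspectrum B) \<and> cspectrum (B :: real^'n^'n) \<noteq> {}"
proof -
  obtain f :: "nat \<Rightarrow> 'n" where f: "bij_betw f {0..<CARD('n)} UNIV"
    using ex_bij_betw_nat_finite[of "UNIV :: 'n set"] by auto
  note J = mat_of_cart_carrier[of f "CARD('n)" "cmat B"]
  from card_finite_spectrum(1)[OF J] spectrum_non_empty[OF J]
  show ?thesis unfolding cspectrum_eq_spectrum_mat_of_cart[OF f] by simp
qed

lemma spectral_radius_attained:
  obtains z where "z \<in> cspectrum B" "cmod z = spectral_radius (B :: real^'n^'n)"
proof -
  have "spectral_radius B \<in> cmod ` cspectrum B"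
    unfolding Defs.spectral_radius_def using cspectrum_finite_nonempty by (intro Max_in) auto
  then obtain z where "spectral_radius B = cmod z" "z \<in> cspectrum B" by (rule imageE)
  then show thesis using that by simp
qed

fun matpow :: "real^'n^'n \<Rightarrow> nat \<Rightarrow> real^'n^'n" where
  "matpow B 0 = mat 1"
| "matpow B (Suc n) = B ** matpow B n"

lemma matpow_Suc_entry: "matpow B (Suc n) $ i $ j = (\<Sum>k\<in>UNIV. B $ i $ k * matpow B n $ k $ j)"
  by (simp add: matrix_matrix_mult_def)

lemma matpow_nonneg:
  assumes "\<And>i j. 0 \<le> B $ i $ j"
  shows "0 \<le> matpow B n $ i $ j"
proof (induction n arbitrary: i j)
  case 0
  then show ?case by (simp add: Finite_Cartesian_Product.mat_def)
next
  case (Suc n)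
  then show ?case
    unfolding matpow_Suc_entry by (auto intro!: sum_nonneg mult_nonneg_nonneg assms)
qed

lemma cmat_mult: "cmat (X ** Y) = cmat X ** cmat (Y :: real^'n^'n)"
  by (simp add: Finite_Cartesian_Product.vec_eq_iff cmat_def matrix_matrix_mult_def)

lemma cmat_mat_1: "cmat (mat 1 :: real^'n^'n) = mat 1"
  by (simp add: Finite_Cartesian_Product.vec_eq_iff cmat_def Finite_Cartesian_Product.mat_def)

lemma cmat_matpow_eigenvector:
  assumes "cmat B *v v = z *s v"
  shows "cmat (matpow B n) *v v = z ^ n *s v"
  by (induction n) (simp_all add: cmat_mat_1 cmat_mult assms vec.scale flip: matrix_vector_mul_assoc)

lemma matpow_entry_ge_eigenvalue_power:
  fixes B :: "real^'n^'n"
  assumes B: "\<And>i j. 0 \<le> B $ i $ j" and z: "z \<in> cspectrum B"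
  shows "\<exists>i j. cmod z ^ n / CARD('n) \<le> matpow B n $ i $ j"
proof (rule ccontr)
  assume small: "\<not> ?thesis"
  define P where "P = matpow B n"
  obtain v where "v \<noteq> 0" and v: "cmat B *v v = z *s v" using z unfolding cspectrum_def by auto
  define m where "m = Max (range (\<lambda>i. cmod (v $ i)))"
  have m_ge: "cmod (v $ i) \<le> m" for i unfolding m_def by (rule Max_ge) auto
  have "m \<in> range (\<lambda>i. cmod (v $ i))" unfolding m_def by (rule Max_in) auto
  then obtain i0 where i0: "cmod (v $ i0) = m" by auto
  obtain x where "v $ x \<noteq> 0"
    using \<open>v \<noteq> 0\<close> by (metis Finite_Cartesian_Product.vec_eq_iff Finite_Cartesian_Product.zero_index)
  then have "0 < m" using m_ge[of x] by (meson zero_less_norm_iff less_le_trans)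
  have "cmod z ^ n * m = cmod ((cmat P *v v) $ i0)"
    using cmat_matpow_eigenvector[OF v, of n] i0 by (simp add: P_def norm_mult norm_power)
  also have "\<dots> = cmod (\<Sum>j\<in>UNIV. complex_of_real (P $ i0 $ j) * v $ j)"
    by (simp add: matrix_vector_mult_def cmat_def)
  also have "\<dots> \<le> (\<Sum>j\<in>UNIV. P $ i0 $ j * m)"
    using matpow_nonneg[OF B] m_ge
    by (intro order_trans[OF norm_sum] sum_mono) (auto simp: P_def norm_mult intro: mult_left_mono)
  also have "\<dots> < (\<Sum>j\<in>(UNIV::'n set). cmod z ^ n / CARD('n) * m)"
    using small \<open>0 < m\<close> by (intro sum_strict_mono mult_strict_right_mono) (auto simp: P_def not_le)
  also have "\<dots> = cmod z ^ n * m" by simp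
  finally show False by simp
qed

lemma entry_le_opnorm: "X $ i $ j \<le> opnorm (X :: real^'n^'n)"
proof -
  have "X $ i $ j = (X *v axis j 1) $ i"
    by (simp add: matrix_vector_mult_def axis_def if_distrib cong: if_cong)
  also have "\<dots> \<le> norm (X *v axis j 1)" by (rule order_trans[OF abs_ge_self component_le_norm_cart])
  also have "\<dots> \<le> opnorm X * norm (axis j (1::real))" unfolding opnorm_def by (rule onorm) simp
  finally show ?thesis by simp
qed

section \<open>Measure preservation\<close>

lemma distr_automorphism: "automorphism M \<theta> \<Longrightarrow> distr M M \<theta> = M"
  unfolding automorphism_def by (intro measure_eqI) (simp_all add: emeasure_distr)

lemma measurable_funpow: "T \<in> M \<rightarrow>\<^sub>M M \<Longrightarrow> T ^^ n \<in> M \<rightarrow>\<^sub>M M"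
  by (induction n) (auto intro: measurable_compose)

lemma distr_funpow:
  assumes T: "T \<in> M \<rightarrow>\<^sub>M M" "distr M M T = M"
  shows "distr M M (T ^^ n) = M"
proof (induction n)
  case (Suc n)
  have "distr M M (T ^^ Suc n) = distr (distr M M (T ^^ n)) M T"
    using distr_distr[OF T(1) measurable_funpow[OF T(1)]] by simp
  also have "\<dots> = M" using Suc T(2) by simp
  finally show ?case .
qed (simp add: distr_id2 id_def)

lemma
  fixes f :: "'a \<Rightarrow> real"
  assumes T: "T \<in> M \<rightarrow>\<^sub>M M" "distr M M T = M" and f: "integrable M f"
  shows integrable_comp_funpow: "integrable M (\<lambda>x. f ((T ^^ n) x))"
    and integral_comp_funpow: "(\<integral>x. f ((T ^^ n) x) \<partial>M) = integral\<^sup>L M f"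
  using integrable_distr_eq[OF measurable_funpow[OF T(1)], of f]
    integral_distr[OF measurable_funpow[OF T(1)], of f] distr_funpow[OF T] f
  by auto

lemma eexp_ext_integral_pos:
  fixes f :: "'a \<Rightarrow> real"
  assumes f: "f \<in> borel_measurable M" "(\<integral>\<^sup>+ x. ennreal (f x) \<partial>M) \<noteq> \<infinity>"
    and pos: "0 < eexp (ext_integral M f)"
  shows "integrable M f \<and> eexp (ext_integral M f) = exp (integral\<^sup>L M f)"
proof -
  define a where "a = (\<integral>\<^sup>+ x. ennreal (f x) \<partial>M)"
  define b where "b = (\<integral>\<^sup>+ x. ennreal (- f x) \<partial>M)"
  have max0: "ennreal (max 0 x) = ennreal x" for x :: real
    by (simp add: max_def ennreal_neg)
  have ext: "ext_integral M f = enn2ereal a - enn2ereal b"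
    unfolding ext_integral_def a_def b_def max0 ..
  have "b \<noteq> \<infinity>"
    using pos f(2) unfolding eexp_def ext a_def[symmetric] by (cases a) auto
  then have int: "integrable M f" using f unfolding real_integrable_def a_def b_def by auto
  have "ext_integral M f = ereal (integral\<^sup>L M f)"
    unfolding ext real_lebesgue_integral_def[OF int] a_def[symmetric] b_def[symmetric]
    using f(2) \<open>b \<noteq> \<infinity>\<close> unfolding a_def[symmetric]
    by (cases a; cases b) (auto simp: enn2real_ennreal)
  then show ?thesis using int unfolding eexp_def by simp
qed

definition upper_tail :: "('a \<Rightarrow> real) \<Rightarrow> real \<Rightarrow> 'a \<Rightarrow> real" where
  "upper_tail g K w = (if K < g w then g w else 0)"

lemma upper_tail_nonneg: "(\<And>w. 0 \<le> g w) \<Longrightarrow> 0 \<le> upper_tail g K w"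
  by (simp add: upper_tail_def)

lemma le_upper_tail: "0 \<le> K \<Longrightarrow> g w \<le> K + upper_tail g K w"
  by (simp add: upper_tail_def)

lemma integrable_upper_tail:
  assumes g: "integrable M g"
  shows "integrable M (upper_tail g K)"
proof (rule Bochner_Integration.integrable_bound[OF g])
  show "upper_tail g K \<in> borel_measurable M"
    using g unfolding upper_tail_def by measurable
qed (auto simp: upper_tail_def)

lemma integral_upper_tail_tendsto_0:
  fixes g :: "'a \<Rightarrow> real"
  assumes g: "integrable M g"
  shows "(\<lambda>K::nat. integral\<^sup>L M (upper_tail g K)) \<longlonglongrightarrow> 0"
proof -
  have "(\<lambda>K::nat. integral\<^sup>L M (upper_tail g K)) \<longlonglongrightarrow> (\<integral>w. 0 \<partial>M)"
  proof (rule integral_dominated_convergence[where w="\<lambda>w. norm (g w)"])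
    show "AE w in M. (\<lambda>K::nat. upper_tail g K w) \<longlonglongrightarrow> 0"
    proof (rule AE_I2)
      fix w
      obtain K0 :: nat where "g w < K0" using reals_Archimedean2 by blast
      then have "\<forall>\<^sub>F K in sequentially. upper_tail g (real K) w = 0"
        unfolding eventually_sequentially upper_tail_def by (intro exI[of _ K0]) auto
      then show "(\<lambda>K::nat. upper_tail g K w) \<longlonglongrightarrow> 0" by (rule tendsto_eventually)
    qed
  qed (use g integrable_upper_tail in \<open>auto simp: upper_tail_def\<close>)
  then show ?thesis by simp
qed

lemma (in finite_measure) measure_tendsto_0_of_AE_eventually_notin:
  assumes E: "\<And>n. E n \<in> sets M" and ev: "AE w in M. \<forall>\<^sub>F n in sequentially. w \<notin> E n"
  shows "(\<lambda>n. measure M (E n)) \<longlonglongrightarrow> 0"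
proof -
  have "(\<lambda>n. \<integral>w. indicator (E n) w \<partial>M) \<longlonglongrightarrow> (\<integral>w. 0 \<partial>M :: real)"
  proof (rule integral_dominated_convergence[where w="\<lambda>_. 1"])
    show "AE w in M. (\<lambda>n. indicator (E n) w :: real) \<longlonglongrightarrow> 0"
      using ev by eventually_elim (intro tendsto_eventually, auto elim: eventually_mono)
  qed (use E in \<open>auto simp: indicator_def\<close>)
  then show ?thesis using E by simp
qed

text \<open>Split \<open>h\<close> along a set E outside of which \<open>h \<le> n c\<close>, and truncate the summands of the
  dominating stationary sum at level K.\<close>

lemma (in prob_space) integral_le_of_stationary_domination:
  fixes h g :: "'a \<Rightarrow> real" and a c K :: real
  assumes T: "T \<in> M \<rightarrow>\<^sub>M M" "distr M M T = M"
    and g: "integrable M g" "\<And>w. 0 \<le> g w"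
    and h: "integrable M h" "\<And>w. w \<in> space M \<Longrightarrow> h w \<le> n * a + (\<Sum>k<n. g ((T ^^ k) w))"
    and E: "E \<in> sets M" "\<And>w. w \<in> space M - E \<Longrightarrow> h w \<le> n * c"
    and "0 \<le> K"
  shows "integral\<^sup>L M h \<le> n * c + n * ((a + K - c) * measure M E) + n * integral\<^sup>L M (upper_tail g K)"
proof -
  define R where "R w = n * c + n * (a + K - c) * indicator E w + (\<Sum>k<n. upper_tail g K ((T ^^ k) w))"
    for w
  have tail: "integrable M (upper_tail g K)"
    using g(1) by (rule integrable_upper_tail)
  have "h w \<le> R w" if w: "w \<in> space M" for w
  proof (cases "w \<in> E")
    case True
    have "(\<Sum>k<n. g ((T ^^ k) w)) \<le> (\<Sum>k<n. K + upper_tail g K ((T ^^ k) w))"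
      using \<open>0 \<le> K\<close> by (intro sum_mono le_upper_tail)
    then show ?thesis using h(2)[OF w] True by (simp add: R_def sum.distrib algebra_simps)
  next
    case False
    have "0 \<le> (\<Sum>k<n. upper_tail g K ((T ^^ k) w))"
      using g(2) by (intro sum_nonneg upper_tail_nonneg)
    moreover have "h w \<le> n * c" using E(2) w False by blast
    ultimately show ?thesis using False by (simp add: R_def)
  qed
  moreover have R: "integrable M R"
    unfolding R_def using E(1) integrable_comp_funpow[OF T tail]
    by (intro Bochner_Integration.integrable_add integrable_mult_right
        Bochner_Integration.integrable_sum) (auto simp: integrable_indicator_iff less_top[symmetric])
  ultimately have "integral\<^sup>L M h \<le> integral\<^sup>L M R"
    using h(1) by (intro integral_mono)
  also have "integral\<^sup>L M R = n * c + n * (a + K - c) * measure M E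
      + (\<Sum>k<n. \<integral>w. upper_tail g K ((T ^^ k) w) \<partial>M)"
    unfolding R_def using E(1) integrable_comp_funpow[OF T tail]
    by (simp add: Bochner_Integration.integral_sum Bochner_Integration.integral_add
        Bochner_Integration.integrable_sum integrable_indicator_iff less_top[symmetric] prob_space)
  also have "\<dots> = n * c + n * ((a + K - c) * measure M E) + n * integral\<^sup>L M (upper_tail g K)"
    by (simp add: integral_comp_funpow[OF T tail])
  finally show ?thesis .
qed

text \<open>Domination by a stationary sum makes \<open>H n / n\<close> uniformly integrable, so an almost sure
  eventual bound \<open>H n \<le> n c\<close> passes to the integrals up to any \<open>\<delta> > 0\<close>.\<close>

lemma (in prob_space) eventually_integral_le_of_stationary_bound:
  fixes H :: "nat \<Rightarrow> 'a \<Rightarrow> real" and g :: "'a \<Rightarrow> real" and a c \<delta> :: real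
  assumes T: "T \<in> M \<rightarrow>\<^sub>M M" "distr M M T = M"
    and g: "integrable M g" "\<And>w. 0 \<le> g w"
    and H: "\<And>n. integrable M (H n)"
    and H_le: "\<And>n w. w \<in> space M \<Longrightarrow> H n w \<le> n * a + (\<Sum>k<n. g ((T ^^ k) w))"
    and H_eventually: "AE w in M. \<forall>\<^sub>F n in sequentially. H n w \<le> n * c"
    and \<delta>: "0 < \<delta>"
  shows "\<forall>\<^sub>F n in sequentially. integral\<^sup>L M (H n) \<le> n * (c + \<delta>)"
proof -
  have "\<forall>\<^sub>F K in sequentially. integral\<^sup>L M (upper_tail g (real K)) < \<delta> / 2"
    using integral_upper_tail_tendsto_0[OF g(1)] \<delta> by (intro order_tendstoD(2)) auto
  then obtain K :: nat where K: "integral\<^sup>L M (upper_tail g K) < \<delta> / 2"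
    using eventually_happens'[OF sequentially_bot] by blast
  define E where "E n = {w \<in> space M. n * c < H n w}" for n
  have [measurable]: "H n \<in> borel_measurable M" for n
    using H by blast
  have E: "E n \<in> sets M" for n
    unfolding E_def by measurable
  have "AE w in M. \<forall>\<^sub>F n in sequentially. w \<notin> E n"
    using H_eventually by eventually_elim (auto simp: E_def not_less elim: eventually_mono)
  then have "(\<lambda>n. (a + K - c) * measure M (E n)) \<longlonglongrightarrow> (a + K - c) * 0"
    by (intro tendsto_mult tendsto_const measure_tendsto_0_of_AE_eventually_notin E)
  then have "\<forall>\<^sub>F n in sequentially. (a + K - c) * measure M (E n) < \<delta> / 2"
    using \<delta> by (intro order_tendstoD(2)) auto
  then show ?thesis
  proof eventually_elim
    case (elim n)
    have "integral\<^sup>L M (H n)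
        \<le> n * c + n * ((a + K - c) * measure M (E n)) + n * integral\<^sup>L M (upper_tail g K)"
      using E H_le by (intro integral_le_of_stationary_domination[OF T g H]) (auto simp: E_def)
    also have "\<dots> \<le> n * c + n * (\<delta> / 2) + n * (\<delta> / 2)"
      using elim K by (intro add_mono mult_left_mono) auto
    finally show ?case by (simp add: algebra_simps)
  qed
qed

section \<open>Logarithmic minorants\<close>

text \<open>\<open>log_minorant M X a\<close> expresses \<open>\<integral> ln X \<ge> ln a\<close> for a positive random variable X whose
  logarithm need not be integrable.\<close>

definition log_minorant :: "'a measure \<Rightarrow> ('a \<Rightarrow> real) \<Rightarrow> real \<Rightarrow> bool" where
  "log_minorant M X a \<longleftrightarrow>
     (\<exists>h. integrable M h \<and> integral\<^sup>L M h = ln a \<and> (\<forall>w \<in> space M. 0 < X w \<and> h w \<le> ln (X w)))"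

lemma sum_mult_ln_div_le_ln_sum:
  fixes q x :: "'i \<Rightarrow> real"
  assumes K: "finite K" "K \<noteq> {}" and q: "sum q K = 1" "\<And>k. k \<in> K \<Longrightarrow> 0 < q k"
    and x: "\<And>k. k \<in> K \<Longrightarrow> 0 < x k"
  shows "(\<Sum>k\<in>K. q k * ln (x k / q k)) \<le> ln (\<Sum>k\<in>K. x k)"
proof -
  have "convex_on {0<..} (\<lambda>y. - ln y)"
    using ln_concave by (simp add: concave_on_def)
  from convex_on_sum[OF K this q(1), of "\<lambda>k. x k / q k"] q(2) x
  have "(\<Sum>k\<in>K. q k * ln (x k / q k)) \<le> ln (\<Sum>k\<in>K. q k * (x k / q k))"
    by (simp add: sum_negf less_imp_le)
  also have "(\<Sum>k\<in>K. q k * (x k / q k)) = (\<Sum>k\<in>K. x k)"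
    using q(2) by (intro sum.cong) (auto simp: less_imp_neq[symmetric])
  finally show ?thesis .
qed

lemma (in prob_space) log_minorant_const: "0 < c \<Longrightarrow> log_minorant M (\<lambda>_. c) c"
  unfolding log_minorant_def by (intro exI[of _ "\<lambda>_. ln c"]) (simp add: prob_space)

lemma log_minorant_integrable_ln:
  assumes "\<And>w. w \<in> space M \<Longrightarrow> 0 < X w" "integrable M (\<lambda>w. ln (X w))"
  shows "log_minorant M X (exp (\<integral>w. ln (X w) \<partial>M))"
  using assms unfolding log_minorant_def by auto

lemma log_minorant_mono:
  assumes "log_minorant M X a" and XY: "\<And>w. w \<in> space M \<Longrightarrow> X w \<le> Y w"
  shows "log_minorant M Y a"
proof -
  obtain h where "integrable M h" "integral\<^sup>L M h = ln a"
    and h: "\<And>w. w \<in> space M \<Longrightarrow> 0 < X w \<and> h w \<le> ln (X w)"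
    using assms(1) unfolding log_minorant_def by blast
  moreover have "0 < Y w \<and> h w \<le> ln (Y w)" if w: "w \<in> space M" for w
  proof -
    have "0 < X w" "h w \<le> ln (X w)" "X w \<le> Y w" using h[OF w] XY[OF w] by auto
    then show ?thesis using ln_mono[of "X w" "Y w"] by linarith
  qed
  ultimately show ?thesis unfolding log_minorant_def by blast
qed

lemma log_minorant_mult:
  assumes X: "log_minorant M X a" and Y: "log_minorant M Y b" and "0 < a" "0 < b"
  shows "log_minorant M (\<lambda>w. X w * Y w) (a * b)"
proof -
  obtain h where "integrable M h" "integral\<^sup>L M h = ln a"
    and h: "\<And>w. w \<in> space M \<Longrightarrow> 0 < X w \<and> h w \<le> ln (X w)"
    using X unfolding log_minorant_def by blast
  obtain h' where "integrable M h'" "integral\<^sup>L M h' = ln b"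
    and h': "\<And>w. w \<in> space M \<Longrightarrow> 0 < Y w \<and> h' w \<le> ln (Y w)"
    using Y unfolding log_minorant_def by blast
  have "0 < X w * Y w \<and> h w + h' w \<le> ln (X w * Y w)" if "w \<in> space M" for w
    using h[OF that] h'[OF that] by (simp add: ln_mult)
  with \<open>0 < a\<close> \<open>0 < b\<close> show ?thesis
    unfolding log_minorant_def
    by (intro exI[of _ "\<lambda>w. h w + h' w"]) (simp add: ln_mult \<open>integrable M h\<close> \<open>integrable M h'\<close>
        \<open>integral\<^sup>L M h = ln a\<close> \<open>integral\<^sup>L M h' = ln b\<close>)
qed

lemma (in prob_space) log_minorant_sum:
  assumes K: "finite K" "K \<noteq> {}" and a: "\<And>k. k \<in> K \<Longrightarrow> 0 < a k"
    and X: "\<And>k. k \<in> K \<Longrightarrow> log_minorant M (X k) (a k)"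
  shows "log_minorant M (\<lambda>w. \<Sum>k\<in>K. X k w) (\<Sum>k\<in>K. a k)"
proof -
  obtain h where h: "\<And>k. k \<in> K \<Longrightarrow> integrable M (h k) \<and> integral\<^sup>L M (h k) = ln (a k) \<and>
      (\<forall>w\<in>space M. 0 < X k w \<and> h k w \<le> ln (X k w))"
    using X unfolding log_minorant_def by metis
  define W where "W = (\<Sum>k\<in>K. a k)"
  have "0 < W" unfolding W_def using K a by (intro sum_pos) auto
  define q where "q k = a k / W" for k
  have q: "0 < q k" if "k \<in> K" for k using a[OF that] \<open>0 < W\<close> by (simp add: q_def)
  have q_sum: "sum q K = 1" using \<open>0 < W\<close> by (simp add: q_def W_def flip: sum_divide_distrib)
  show ?thesis
    unfolding log_minorant_def
  proof (intro exI[of _ "\<lambda>w. \<Sum>k\<in>K. q k * (h k w - ln (q k))"] conjI ballI)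
    show "integrable M (\<lambda>w. \<Sum>k\<in>K. q k * (h k w - ln (q k)))" using h by auto
    have "(\<integral>w. (\<Sum>k\<in>K. q k * (h k w - ln (q k))) \<partial>M) =
        (\<Sum>k\<in>K. \<integral>w. q k * (h k w - ln (q k)) \<partial>M)"
      using h by (intro Bochner_Integration.integral_sum) auto
    also have "\<dots> = (\<Sum>k\<in>K. q k * ln W)"
    proof (rule sum.cong[OF refl])
      fix k assume k: "k \<in> K"
      then have "(\<integral>w. q k * (h k w - ln (q k)) \<partial>M) = q k * (ln (a k) - ln (q k))"
        using h[OF k] by (simp add: prob_space)
      also have "\<dots> = q k * ln W" using a[OF k] \<open>0 < W\<close> by (simp add: q_def ln_div)
      finally show "(\<integral>w. q k * (h k w - ln (q k)) \<partial>M) = q k * ln W" .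
    qed
    also have "\<dots> = ln (\<Sum>k\<in>K. a k)" using q_sum by (simp add: W_def flip: sum_distrib_right)
    finally show "(\<integral>w. (\<Sum>k\<in>K. q k * (h k w - ln (q k))) \<partial>M) = ln (\<Sum>k\<in>K. a k)" .
  next
    fix w assume w: "w \<in> space M"
    have X_pos: "0 < X k w" if "k \<in> K" for k using h that w by blast
    then show "0 < (\<Sum>k\<in>K. X k w)" using K by (intro sum_pos) auto
    have "(\<Sum>k\<in>K. q k * (h k w - ln (q k))) \<le> (\<Sum>k\<in>K. q k * ln (X k w / q k))"
    proof (intro sum_mono mult_left_mono)
      fix k assume k: "k \<in> K"
      have "h k w \<le> ln (X k w)" using h[OF k] w by blast
      then show "h k w - ln (q k) \<le> ln (X k w / q k)" using X_pos[OF k] q[OF k] by (simp add: ln_div)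
      show "0 \<le> q k" using q[OF k] by simp
    qed
    also have "\<dots> \<le> ln (\<Sum>k\<in>K. X k w)"
      using q X_pos by (intro sum_mult_ln_div_le_ln_sum[OF K q_sum])
    finally show "(\<Sum>k\<in>K. q k * (h k w - ln (q k))) \<le> ln (\<Sum>k\<in>K. X k w)" .
  qed
qed

lemma eventually_ln_le_of_eln_div_tendsto:
  fixes x :: "nat \<Rightarrow> real" and c :: real
  assumes lim: "(\<lambda>n. eln (x n) / ereal (real n)) \<longlonglongrightarrow> l" and "l < ereal c"
    and pos: "\<And>n. 0 < x n"
  shows "\<forall>\<^sub>F n in sequentially. ln (x n) \<le> n * c"
  using order_tendstoD(2)[OF lim \<open>l < ereal c\<close>] eventually_ge_at_top[of 1]
proof eventually_elim
  case (elim n)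
  then have "ln (x n) / n < c" using pos[of n] by (simp add: eln_def)
  then show ?case using elim(2) by (simp add: divide_less_eq mult.commute)
qed

section \<open>Products of a nonnegative matrix and random diagonal matrices\<close>

locale random_diagonal_product = prob_space M
  for M :: "'a measure" and \<theta> :: "'a \<Rightarrow> 'a" and A :: "real^'n^'n" and D :: "'a \<Rightarrow> real^'n^'n" +
  assumes \<theta>_measurable: "\<theta> \<in> M \<rightarrow>\<^sub>M M"
    and \<theta>_preserving: "distr M M \<theta> = M"
    and A_nonneg: "0 \<le> A $ i $ j"
    and D_measurable: "D \<in> borel_measurable M"
    and D_diagonal: "w \<in> space M \<Longrightarrow> i \<noteq> j \<Longrightarrow> D w $ i $ j = 0"
    and D_pos: "w \<in> space M \<Longrightarrow> 0 < D w $ i $ i"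
    and integrable_lnplus_dmax: "integrable M (\<lambda>w. max 0 (ln (Max (range (\<lambda>i. D w $ i $ i)))))"
begin

definition dmax :: "'a \<Rightarrow> real" where
  "dmax w = Max (range (\<lambda>i. D w $ i $ i))"

definition dbar :: "'n \<Rightarrow> real" where
  "dbar i = eexp (ext_integral M (\<lambda>w. ln (D w $ i $ i)))"

definition Dbar :: "real^'n^'n" where
  "Dbar = (\<chi> i j. if i = j then dbar i else 0)"

abbreviation S :: "nat \<Rightarrow> 'a \<Rightarrow> real^'n^'n" where
  "S n w \<equiv> cocycle \<theta> (\<lambda>u. A ** D u) n w"

definition \<alpha> :: real where
  "\<alpha> = 1 + (\<Sum>i\<in>UNIV. \<Sum>k\<in>UNIV. A $ i $ k)"

lemma funpow_in_space: "w \<in> space M \<Longrightarrow> (\<theta> ^^ n) w \<in> space M"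
  using measurable_space[OF measurable_funpow[OF \<theta>_measurable]] .

lemma D_entry_measurable[measurable]: "(\<lambda>w. D w $ i $ j) \<in> borel_measurable M"
proof -
  have "(\<lambda>X::real^'n^'n. X $ i $ j) \<in> borel_measurable borel"
    by (intro borel_measurable_continuous_onI continuous_intros)
  from measurable_compose[OF D_measurable this] show ?thesis by simp
qed

lemma diag_le_dmax: "D w $ k $ k \<le> dmax w"
  unfolding dmax_def by (rule Max_ge) auto

lemma integrable_ln_max_1_dmax: "integrable M (\<lambda>w. ln (max 1 (dmax w)))"
proof -
  have "0 < dmax w" if "w \<in> space M" for w
    using that D_pos diag_le_dmax by (meson less_le_trans)
  then have "integrable M (\<lambda>w. max 0 (ln (dmax w))) = integrable M (\<lambda>w. ln (max 1 (dmax w)))"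
    by (intro Bochner_Integration.integrable_cong) (auto simp: max_def)
  then show ?thesis using integrable_lnplus_dmax by (simp add: dmax_def)
qed

lemma dbar_nonneg: "0 \<le> dbar k"
  by (simp add: dbar_def eexp_def)

lemma log_minorant_diag_funpow:
  assumes "0 < dbar k"
  shows "log_minorant M (\<lambda>w. D ((\<theta> ^^ n) w) $ k $ k) (dbar k)"
proof -
  have d: "(\<lambda>w. ln (D w $ k $ k)) \<in> borel_measurable M"
    by measurable
  have "(\<integral>\<^sup>+ w. ennreal (ln (D w $ k $ k)) \<partial>M) \<le> (\<integral>\<^sup>+ w. ennreal (ln (max 1 (dmax w))) \<partial>M)"
    using D_pos diag_le_dmax by (intro nn_integral_mono ennreal_leI) (meson ln_le_cancel_iff max.coboundedI2 less_le_trans)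
  also have "\<dots> < \<infinity>"
    using integrable_ln_max_1_dmax by (simp add: real_integrable_def top.not_eq_extremum)
  finally have "integrable M (\<lambda>w. ln (D w $ k $ k)) \<and> dbar k = exp (\<integral>w. ln (D w $ k $ k) \<partial>M)"
    using eexp_ext_integral_pos[OF d] assms unfolding dbar_def by simp
  then show ?thesis
    using log_minorant_integrable_ln[of M "\<lambda>w. D ((\<theta> ^^ n) w) $ k $ k"] D_pos funpow_in_space
      integrable_comp_funpow[OF \<theta>_measurable \<theta>_preserving, of "\<lambda>w. ln (D w $ k $ k)"]
      integral_comp_funpow[OF \<theta>_measurable \<theta>_preserving, of "\<lambda>w. ln (D w $ k $ k)"]
    by simp
qed

lemma A_times_diagonal_entry:
  assumes "\<And>i j. i \<noteq> j \<Longrightarrow> E $ i $ j = 0"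
  shows "(A ** E) $ i $ k = A $ i $ k * E $ k $ k"
proof -
  have "(A ** E) $ i $ k = (\<Sum>l\<in>UNIV. A $ i $ l * E $ l $ k)"
    by (simp add: matrix_matrix_mult_def)
  also have "\<dots> = (\<Sum>l\<in>UNIV. if l = k then A $ i $ k * E $ k $ k else 0)"
    by (rule sum.cong) (use assms in auto)
  finally show ?thesis by simp
qed

lemma A_Dbar_entry: "(A ** Dbar) $ i $ k = A $ i $ k * dbar k"
  by (subst A_times_diagonal_entry) (simp_all add: Dbar_def)

lemma A_Dbar_nonneg: "0 \<le> (A ** Dbar) $ i $ k"
  by (simp add: A_Dbar_entry A_nonneg dbar_nonneg)

lemma S_Suc_entry:
  assumes "w \<in> space M"
  shows "S (Suc n) w $ i $ j = (\<Sum>k\<in>UNIV. A $ i $ k * D ((\<theta> ^^ n) w) $ k $ k * S n w $ k $ j)"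
  using A_times_diagonal_entry[OF D_diagonal[OF funpow_in_space[OF assms]]]
  by (simp add: matrix_matrix_mult_def)

lemma S_nonneg: "w \<in> space M \<Longrightarrow> 0 \<le> S n w $ i $ j"
proof (induction n arbitrary: i j)
  case 0
  then show ?case by (simp add: Finite_Cartesian_Product.mat_def)
next
  case (Suc n)
  then show ?case
    unfolding S_Suc_entry[OF Suc.prems]
    by (auto intro!: sum_nonneg mult_nonneg_nonneg A_nonneg less_imp_le[OF D_pos] funpow_in_space)
qed

lemma log_minorant_S_Suc_entry:
  assumes IH: "\<And>k. 0 < matpow (A ** Dbar) n $ k $ j \<Longrightarrow>
      log_minorant M (\<lambda>w. S n w $ k $ j) (matpow (A ** Dbar) n $ k $ j)"
    and pos: "0 < matpow (A ** Dbar) (Suc n) $ i $ j"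
  shows "log_minorant M (\<lambda>w. S (Suc n) w $ i $ j) (matpow (A ** Dbar) (Suc n) $ i $ j)"
proof -
  define t where "t k = A $ i $ k * dbar k * matpow (A ** Dbar) n $ k $ j" for k
  define K where "K = {k. 0 < t k}"
  have t_nonneg: "0 \<le> t k" for k
    using A_nonneg dbar_nonneg matpow_nonneg[OF A_Dbar_nonneg] by (simp add: t_def)
  have B_entry: "matpow (A ** Dbar) (Suc n) $ i $ j = (\<Sum>k\<in>K. t k)"
    unfolding matpow_Suc_entry A_Dbar_entry t_def[symmetric]
    using t_nonneg by (intro sum.mono_neutral_right) (auto simp: K_def less_le)
  have factors: "0 < A $ i $ k" "0 < dbar k" "0 < matpow (A ** Dbar) n $ k $ j" if "k \<in> K" for k
    using that A_nonneg[of i k] dbar_nonneg[of k] matpow_nonneg[OF A_Dbar_nonneg, of n k j]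
    by (auto simp: K_def t_def zero_less_mult_iff less_le)
  have "log_minorant M (\<lambda>w. \<Sum>k\<in>K. A $ i $ k * D ((\<theta> ^^ n) w) $ k $ k * S n w $ k $ j)
      (\<Sum>k\<in>K. t k)"
  proof (rule log_minorant_sum)
    show "K \<noteq> {}" using pos B_entry by auto
    fix k assume k: "k \<in> K"
    then show "0 < t k" by (simp add: K_def)
    have "log_minorant M (\<lambda>w. A $ i $ k * D ((\<theta> ^^ n) w) $ k $ k) (A $ i $ k * dbar k)"
      using factors[OF k] by (intro log_minorant_mult log_minorant_const log_minorant_diag_funpow)
    then show "log_minorant M (\<lambda>w. A $ i $ k * D ((\<theta> ^^ n) w) $ k $ k * S n w $ k $ j) (t k)"
      unfolding t_def by (rule log_minorant_mult[OF _ IH]) (use factors[OF k] in auto)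
  qed simp
  then show ?thesis
    unfolding B_entry
  proof (rule log_minorant_mono)
    fix w assume w: "w \<in> space M"
    show "(\<Sum>k\<in>K. A $ i $ k * D ((\<theta> ^^ n) w) $ k $ k * S n w $ k $ j) \<le> S (Suc n) w $ i $ j"
      unfolding S_Suc_entry[OF w]
      using A_nonneg less_imp_le[OF D_pos[OF funpow_in_space[OF w]]] S_nonneg[OF w]
      by (intro sum_mono2) (auto intro!: mult_nonneg_nonneg)
  qed
qed

lemma log_minorant_S_entry:
  "0 < matpow (A ** Dbar) n $ i $ j \<Longrightarrow>
     log_minorant M (\<lambda>w. S n w $ i $ j) (matpow (A ** Dbar) n $ i $ j)"
proof (induction n arbitrary: i)
  case 0
  then have "i = j" by (auto simp: Finite_Cartesian_Product.mat_def split: if_splits)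
  then show ?case using log_minorant_const[of 1] by (simp add: Finite_Cartesian_Product.mat_def)
next
  case (Suc n)
  show ?case by (rule log_minorant_S_Suc_entry[OF Suc.IH Suc.prems])
qed

lemma \<alpha>_ge_1: "1 \<le> \<alpha>"
  unfolding \<alpha>_def using A_nonneg by (simp add: sum_nonneg)

lemma row_sum_le_\<alpha>: "(\<Sum>k\<in>UNIV. A $ i $ k) \<le> \<alpha>"
proof -
  have "(\<Sum>k\<in>UNIV. A $ i $ k) \<le> (\<Sum>i\<in>UNIV. \<Sum>k\<in>UNIV. A $ i $ k)"
    using A_nonneg by (intro member_le_sum sum_nonneg) auto
  then show ?thesis unfolding \<alpha>_def by simp
qed

lemma S_entry_le:
  "w \<in> space M \<Longrightarrow> S n w $ i $ j \<le> \<alpha> ^ n * (\<Prod>k<n. max 1 (dmax ((\<theta> ^^ k) w)))"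
proof (induction n arbitrary: i j)
  case 0
  then show ?case by (simp add: Finite_Cartesian_Product.mat_def)
next
  case (Suc n)
  define u where "u = (\<theta> ^^ n) w"
  define b where "b = \<alpha> ^ n * (\<Prod>k<n. max 1 (dmax ((\<theta> ^^ k) w)))"
  have "0 \<le> b" unfolding b_def using \<alpha>_ge_1 by (intro mult_nonneg_nonneg prod_nonneg) auto
  have "S (Suc n) w $ i $ j = (\<Sum>k\<in>UNIV. A $ i $ k * (D u $ k $ k * S n w $ k $ j))"
    unfolding S_Suc_entry[OF Suc.prems] u_def by (simp add: mult.assoc)
  also have "\<dots> \<le> (\<Sum>k\<in>UNIV. A $ i $ k * (max 1 (dmax u) * b))"
  proof (intro sum_mono mult_left_mono mult_mono A_nonneg)
    fix k
    show "D u $ k $ k \<le> max 1 (dmax u)" using diag_le_dmax[of u k] by linarith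
    show "S n w $ k $ j \<le> b" using Suc.IH[OF Suc.prems] by (simp add: b_def)
    show "0 \<le> max 1 (dmax u)" by simp
    show "0 \<le> S n w $ k $ j" using S_nonneg[OF Suc.prems] .
  qed
  also have "\<dots> = (\<Sum>k\<in>UNIV. A $ i $ k) * (max 1 (dmax u) * b)"
    by (simp add: sum_distrib_right)
  also have "\<dots> \<le> \<alpha> * (max 1 (dmax u) * b)"
    using \<open>0 \<le> b\<close> by (intro mult_right_mono row_sum_le_\<alpha>) auto
  finally show ?case by (simp add: b_def u_def algebra_simps)
qed

lemma ln_S_entry_le:
  assumes w: "w \<in> space M" and pos: "0 < S n w $ i $ j"
  shows "ln (S n w $ i $ j) \<le> n * ln \<alpha> + (\<Sum>k<n. ln (max 1 (dmax ((\<theta> ^^ k) w))))"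
proof -
  have prod_pos: "0 < (\<Prod>k<n. max 1 (dmax ((\<theta> ^^ k) w)))"
    by (intro prod_pos) (auto simp: max_def)
  have "ln (S n w $ i $ j) \<le> ln (\<alpha> ^ n * (\<Prod>k<n. max 1 (dmax ((\<theta> ^^ k) w))))"
    using S_entry_le[OF w, of n i j] pos prod_pos \<alpha>_ge_1 by simp
  also have "\<dots> = n * ln \<alpha> + (\<Sum>k<n. ln (max 1 (dmax ((\<theta> ^^ k) w))))"
    using \<alpha>_ge_1 prod_pos by (simp add: ln_mult ln_realpow ln_prod max_def)
  finally show ?thesis .
qed

lemma log_minorants_of_eigenvalue:
  assumes z: "z \<in> cspectrum (A ** Dbar)" "z \<noteq> 0"
  obtains H :: "nat \<Rightarrow> 'a \<Rightarrow> real" where "\<And>n. integrable M (H n)"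
    and "\<And>n. n * ln (cmod z) - ln CARD('n) \<le> integral\<^sup>L M (H n)"
    and "\<And>n w. w \<in> space M \<Longrightarrow> 0 < opnorm (S n w) \<and> H n w \<le> ln (opnorm (S n w))"
    and "\<And>n w. w \<in> space M \<Longrightarrow> H n w \<le> n * ln \<alpha> + (\<Sum>k<n. ln (max 1 (dmax ((\<theta> ^^ k) w))))"
proof -
  obtain I J where IJ: "\<And>n. cmod z ^ n / CARD('n) \<le> matpow (A ** Dbar) n $ I n $ J n"
    using matpow_entry_ge_eigenvalue_power[OF A_Dbar_nonneg z(1)] by metis
  have pos: "0 < matpow (A ** Dbar) n $ I n $ J n" for n
    using z(2) by (intro less_le_trans[OF _ IJ]) simp
  obtain H where H: "\<And>n. integrable M (H n) \<and> integral\<^sup>L M (H n) = ln (matpow (A ** Dbar) n $ I n $ J n) \<and>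
      (\<forall>w\<in>space M. 0 < S n w $ I n $ J n \<and> H n w \<le> ln (S n w $ I n $ J n))"
    using log_minorant_S_entry[OF pos] unfolding log_minorant_def by metis
  show ?thesis
  proof (rule that)
    fix n
    show "integrable M (H n)" using H by blast
    have "n * ln (cmod z) - ln CARD('n) = ln (cmod z ^ n / CARD('n))"
      using z(2) by (simp add: ln_div ln_realpow)
    also have "\<dots> \<le> ln (matpow (A ** Dbar) n $ I n $ J n)"
      using IJ[of n] pos[of n] z(2) by (subst ln_le_cancel_iff) auto
    also have "\<dots> = integral\<^sup>L M (H n)"
      using H by simp
    finally show "n * ln (cmod z) - ln CARD('n) \<le> integral\<^sup>L M (H n)" .
    fix w assume w: "w \<in> space M"
    then have S: "0 < S n w $ I n $ J n" "H n w \<le> ln (S n w $ I n $ J n)" using H by auto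
    then show "0 < opnorm (S n w) \<and> H n w \<le> ln (opnorm (S n w))"
      using entry_le_opnorm[of "S n w" "I n" "J n"] by (auto intro: order_trans)
    show "H n w \<le> n * ln \<alpha> + (\<Sum>k<n. ln (max 1 (dmax ((\<theta> ^^ k) w))))"
      using ln_S_entry_le[OF w S(1)] S(2) by linarith
  qed
qed

lemma ln_spectral_radius_le:
  assumes lyap: "AE w in M. (\<lambda>n. eln (opnorm (S n w)) / ereal (real n)) \<longlonglongrightarrow> lam"
  shows "eln (spectral_radius (A ** Dbar)) \<le> lam"
proof (rule ccontr)
  define \<rho> where "\<rho> = spectral_radius (A ** Dbar)"
  assume "\<not> eln (spectral_radius (A ** Dbar)) \<le> lam"
  then have lt: "lam < eln \<rho>" by (simp add: \<rho>_def)
  then have "\<rho> \<noteq> 0" by (auto simp: eln_def)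
  obtain z where z: "z \<in> cspectrum (A ** Dbar)" "cmod z = \<rho>"
    using spectral_radius_attained \<rho>_def by metis
  with \<open>\<rho> \<noteq> 0\<close> have "0 < \<rho>" "z \<noteq> 0" by auto
  obtain c where c: "lam < ereal c" "c < ln \<rho>"
    using ereal_dense2[of lam "ln \<rho>"] lt \<open>\<rho> \<noteq> 0\<close> by (auto simp: eln_def)
  obtain H :: "nat \<Rightarrow> 'a \<Rightarrow> real" where H_int: "\<And>n. integrable M (H n)"
    and H_lower: "\<And>n. n * ln \<rho> - ln CARD('n) \<le> integral\<^sup>L M (H n)"
    and H_opnorm: "\<And>n w. w \<in> space M \<Longrightarrow> 0 < opnorm (S n w) \<and> H n w \<le> ln (opnorm (S n w))"
    and H_upper: "\<And>n w. w \<in> space M \<Longrightarrow> H n w \<le> n * ln \<alpha> + (\<Sum>k<n. ln (max 1 (dmax ((\<theta> ^^ k) w))))"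
    using log_minorants_of_eigenvalue[OF z(1) \<open>z \<noteq> 0\<close>] z(2) by metis
  have H_eventually: "AE w in M. \<forall>\<^sub>F n in sequentially. H n w \<le> n * c"
    using lyap AE_space
  proof eventually_elim
    case (elim w)
    have "0 < opnorm (S n w)" "H n w \<le> ln (opnorm (S n w))" for n
      using H_opnorm[OF elim(2)] by auto
    with eventually_ln_le_of_eln_div_tendsto[OF elim(1) c(1)] show ?case
      by (auto elim!: eventually_mono intro: order_trans)
  qed
  define \<delta> where "\<delta> = (ln \<rho> - c) / 2"
  have "0 < \<delta>" using c(2) by (simp add: \<delta>_def)
  obtain m :: nat where m: "ln CARD('n) / \<delta> < m" using reals_Archimedean2 by blast
  have "\<forall>\<^sub>F n in sequentially. integral\<^sup>L M (H n) \<le> n * (c + \<delta>) \<and> m \<le> n"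
    using eventually_integral_le_of_stationary_bound[OF \<theta>_measurable \<theta>_preserving
        integrable_ln_max_1_dmax _ H_int H_upper H_eventually \<open>0 < \<delta>\<close>]
    by (intro eventually_conj eventually_ge_at_top) auto
  then obtain n where n: "integral\<^sup>L M (H n) \<le> n * (c + \<delta>)" "m \<le> n"
    by (auto simp: eventually_sequentially)
  have "ln CARD('n) < n * \<delta>"
    using m n(2) \<open>0 < \<delta>\<close> by (simp add: pos_divide_less_eq order.strict_trans2)
  moreover have "n * ln \<rho> = n * (c + \<delta>) + n * \<delta>"
    by (simp add: \<delta>_def algebra_simps)
  ultimately show False using H_lower[of n] n(1) by linarith
qed

end

theorem mainTheorem1:
  fixes M :: "'a measure" and \<theta> :: "'a \<Rightarrow> 'a"
    and A :: "real^'n^'n" and D :: "'a \<Rightarrow> real^'n^'n" and lam :: ereal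
  assumes "prob_space M"
    and "ergodic_automorphism M \<theta>"
    and "\<forall>i j. A $ i $ j \<ge> 0"
    and "D \<in> borel_measurable M"
    and A1: "\<forall>w \<in> space M. (\<forall>i j. i \<noteq> j \<longrightarrow> D w $ i $ j = 0) \<and> (\<forall>i. D w $ i $ i > 0)"
    and A2: "integrable M (\<lambda>w. max 0 (ln (Max (range (\<lambda>i. D w $ i $ i)))))"
    and lyap: "AE w in M. (\<lambda>n. eln (opnorm (cocycle \<theta> (\<lambda>u. A ** D u) n w)) / ereal (real n))
                 \<longlonglongrightarrow> lam"
  shows "eln (spectral_radius (A ** (\<chi> i j. if i = j then eexp (ext_integral M (\<lambda>w. ln (D w $ i $ i))) else 0)))
           \<le> lam"
proof -
  have "automorphism M \<theta>" using assms(2) by (simp add: ergodic_automorphism_def)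
  then interpret random_diagonal_product M \<theta> A D
    using assms
    by (intro random_diagonal_product.intro random_diagonal_product_axioms.intro)
      (auto simp: automorphism_def distr_automorphism)
  show ?thesis using ln_spectral_radius_le[OF lyap] unfolding Dbar_def dbar_def .
qed

end
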